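(* Let $1\le s<\infty$, $r>1$, let $G_1,G_2\subset\mathbb{R}^n$ be bounded $L^s(\mu)$-averaging domains with $G_1\cap G_2\neq\emptyset$, where $d\mu=w(z)\,dz$ and $w\in A_r(G_1\cup G_2)$. Then $G_1\cup G_2$ is an $L^s(\mu)$-averaging domain.
   Context: A weight $w\ge0$ satisfies the $A_r$ condition on a domain $\Omega$ ($r>1$), written $w\in A_r(\Omega)$, if $\sup_{B\subset\Omega}\left(\frac{1}{|B|}\int_Bw\,dz\right)\left(\frac{1}{|B|}\int_Bw^{\frac{1}{1-r}}\,dz\right)^{r-1}<\infty$, the supremum over balls $B\subset\Omega$. The measure $\mu$ is $d\mu=w\,dz$. A bounded domain $\Omega$ is $L^s(\mu)$-averaging if there is a constant $C$ such that for all $u\in L^1_{\mathrm{loc}}(\Omega,\mu)$, $\left(\frac{1}{\mu(\Omega)}\int_\Omega|u-u_{\Omega}|^s\,d\mu\right)^{1/s}\le C\left(\sup_{B\subset\Omega}\frac{1}{\mu(B)}\int_B|u-u_B|^s\,d\mu\right)^{1/s}$, where $B$ ranges over open balls in $\Omega$ and $u_E=\frac{1}{\mu(E)}\int_Eu\,d\mu$. (Equivalently, for $w\in A_r$, $\Omega$ is $L^s(\mu)$-averaging iff $\frac{1}{\mu(\Omega)}\int_\Omega k(z,z_0;\Omega)^s\,d\mu<\infty$ for some $z_0\in\Omega$, where $k$ is the quasihyperbolic distance.) *)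

theory Defs
  imports "HOL-Analysis.Analysis"
begin

definition wmeasure :: "('a::euclidean_space \<Rightarrow> real) \<Rightarrow> 'a measure" where
  "wmeasure w = density lborel (\<lambda>z. ennreal (w z))"

definition domain :: "('a::euclidean_space) set \<Rightarrow> bool" where
  "domain \<Omega> \<longleftrightarrow> open \<Omega> \<and> connected \<Omega> \<and> \<Omega> \<noteq> {}"

definition balls_in :: "('a::euclidean_space) set \<Rightarrow> 'a set set" where
  "balls_in \<Omega> = {ball x \<rho> | x \<rho>. 0 < \<rho> \<and> ball x \<rho> \<subseteq> \<Omega>}"

text \<open>Muckenhoupt A_r condition on Omega (r > 1): the supremum over balls
  B in Omega of (avg_B w) (avg_B w^(1/(1-r)))^(r-1) is finite; both averages
  are required to be finite (the convention w^(1/(1-r)) = infinity where w = 0).\<close>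
definition A_weight :: "real \<Rightarrow> ('a::euclidean_space) set \<Rightarrow> ('a \<Rightarrow> real) \<Rightarrow> bool" where
  "A_weight r \<Omega> w \<longleftrightarrow>
     w \<in> borel_measurable borel \<and> (\<forall>z. 0 \<le> w z) \<and>
     (\<exists>K::real. \<forall>B\<in>balls_in \<Omega>.
        (\<integral>\<^sup>+ z\<in>B. ennreal (w z) \<partial>lborel) < \<infinity> \<and>
        (\<integral>\<^sup>+ z\<in>B. (if 0 < w z then ennreal (w z powr (1 / (1 - r))) else \<infinity>) \<partial>lborel) < \<infinity> \<and>
        (enn2real (\<integral>\<^sup>+ z\<in>B. ennreal (w z) \<partial>lborel) / measure lborel B) *
        (enn2real (\<integral>\<^sup>+ z\<in>B. (if 0 < w z then ennreal (w z powr (1 / (1 - r))) else \<infinity>) \<partial>lborel)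
            / measure lborel B) powr (r - 1) \<le> K)"

definition L1_loc :: "'a measure \<Rightarrow> ('a::euclidean_space) set \<Rightarrow> ('a \<Rightarrow> real) \<Rightarrow> bool" where
  "L1_loc \<mu> \<Omega> u \<longleftrightarrow> u \<in> borel_measurable \<mu> \<and>
     (\<forall>K. compact K \<and> K \<subseteq> \<Omega> \<longrightarrow> set_integrable \<mu> K u)"

definition avg :: "'a measure \<Rightarrow> 'a set \<Rightarrow> ('a \<Rightarrow> real) \<Rightarrow> real" where
  "avg \<mu> E u = (\<integral>z\<in>E. u z \<partial>\<mu>) / measure \<mu> E"

definition osc :: "'a measure \<Rightarrow> real \<Rightarrow> 'a set \<Rightarrow> ('a \<Rightarrow> real) \<Rightarrow> ennreal" where
  "osc \<mu> s E u = (\<integral>\<^sup>+ z\<in>E. ennreal (\<bar>u z - avg \<mu> E u\<bar> powr s) \<partial>\<mu>) / emeasure \<mu> E"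

text \<open>L^s(mu)-averaging domain: bounded domain of finite mu-measure with a constant C
  such that for all u in L^1_loc(Omega, mu)
  (1/mu(Omega) int_Omega |u-u_Omega|^s)^(1/s) \<le> C sup_B (1/mu(B) int_B |u-u_B|^s)^(1/s);
  stated equivalently after raising both sides to the power s.\<close>
definition averaging_domain :: "real \<Rightarrow> ('a::euclidean_space \<Rightarrow> real) \<Rightarrow> 'a set \<Rightarrow> bool" where
  "averaging_domain s w \<Omega> \<longleftrightarrow>
     domain \<Omega> \<and> bounded \<Omega> \<and> emeasure (wmeasure w) \<Omega> < \<infinity> \<and>
     (\<exists>C::real. C \<ge> 0 \<and> (\<forall>u. L1_loc (wmeasure w) \<Omega> u \<longrightarrow>
        osc (wmeasure w) s \<Omega> u \<le> ennreal (C powr s) * (SUP B\<in>balls_in \<Omega>. osc (wmeasure w) s B u)))"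

end

theory Submission
  imports Defs
begin

(*
  Fix a ball B inside G1 \<inter> G2 and put I_i = int_{G_i} |u - u_{G_i}|^s d\<mu>; the averaging
  property of G_i bounds I_i by C_i^s \<mu>(G_i) times the supremum of the oscillations over balls.
  Integrating the quasi-triangle inequality |a - b|^s \<le> 2^s (|a - u|^s + |u - b|^s) over B
  compares the two means, \<mu>(B) |u_{G1} - u_{G2}|^s \<le> 2^s (I_1 + I_2), and so bounds
  int_{G1 \<union> G2} |u - u_{G1}|^s by a multiple of I_1 + I_2. Jensen's inequality
  \<mu>(E) |u_E - c|^s \<le> int_E |u - c|^s finally replaces the centre u_{G1} by the mean over the union.
  The A_r condition is needed only to ensure \<mu>(B) > 0 (w cannot vanish on a non-null part of a
  ball, because w^(1/(1-r)) is integrable there).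
*)

definition dev :: "'a measure \<Rightarrow> real \<Rightarrow> 'a set \<Rightarrow> ('a \<Rightarrow> real) \<Rightarrow> real \<Rightarrow> ennreal"
  where
  "dev M s E u c = (\<integral>\<^sup>+ z\<in>E. ennreal (\<bar>u z - c\<bar> powr s) \<partial>M)"

lemma osc_eq_dev: "osc M s E u = dev M s E u (avg M E u) / emeasure M E"
  by (simp add: osc_def dev_def)

lemma abs_diff_powr_le:
  fixes x y z s :: real
  assumes "0 \<le> s"
  shows "\<bar>x - y\<bar> powr s \<le> 2 powr s * (\<bar>x - z\<bar> powr s + \<bar>z - y\<bar> powr s)"
proof -
  let ?m = "max \<bar>x - z\<bar> \<bar>z - y\<bar>"
  have "\<bar>x - y\<bar> \<le> 2 * ?m"
    by (simp add: max_def abs_if)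
  then have "\<bar>x - y\<bar> powr s \<le> (2 * ?m) powr s"
    by (intro powr_mono2) (use assms in auto)
  also have "\<dots> = 2 powr s * ?m powr s"
    by (simp add: powr_mult)
  also have "?m powr s \<le> \<bar>x - z\<bar> powr s + \<bar>z - y\<bar> powr s"
    by (simp add: max_def)
  finally show ?thesis
    by simp
qed

lemma powr_tangent_le:
  fixes x t s :: real
  assumes "0 \<le> x" "0 < t" "1 \<le> s"
  shows "s * t powr (s - 1) * x \<le> x powr s + (s - 1) * t powr s"
proof (cases "s = 1")
  case True
  then show ?thesis using assms by simp
next
  case False
  with assms have "1 < s" by simp
  define q where "q = s / (s - 1)"
  have "x * t powr (s - 1) \<le> x powr s / s + (t powr (s - 1)) powr q / q"
    by (rule Youngs_inequality) (use \<open>1 < s\<close> assms in \<open>auto simp: q_def field_simps\<close>)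
  also have "(t powr (s - 1)) powr q = t powr s"
    using \<open>1 < s\<close> by (simp add: powr_powr q_def)
  finally have "s * (x * t powr (s - 1)) \<le> s * (x powr s / s + t powr s / q)"
    using \<open>1 < s\<close> by (intro mult_left_mono) auto
  also have "\<dots> = x powr s + (s - 1) * t powr s"
    using \<open>1 < s\<close> by (simp add: q_def field_simps)
  finally show ?thesis
    by (simp add: mult_ac)
qed

lemma nn_set_integral_const:
  "A \<in> sets M \<Longrightarrow> (\<integral>\<^sup>+ x\<in>A. c \<partial>M) = emeasure M A * c"
  using nn_integral_cmult_indicator[of A M c] by (simp add: mult.commute)

lemma nn_set_integral_cmult_add:
  assumes [measurable]: "E \<in> sets M" "f \<in> borel_measurable M" "g \<in> borel_measurable M"
  shows "(\<integral>\<^sup>+ z\<in>E. ennreal k * (f z + g z) \<partial>M)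
    = ennreal k * ((\<integral>\<^sup>+ z\<in>E. f z \<partial>M) + (\<integral>\<^sup>+ z\<in>E. g z \<partial>M))"
  by (subst nn_set_integral_add[symmetric], simp_all, subst nn_integral_cmult[symmetric])
    (auto simp: mult.assoc)

lemma set_integrable_const:
  fixes c :: real
  shows "E \<in> sets M \<Longrightarrow> emeasure M E < \<infinity> \<Longrightarrow> set_integrable M E (\<lambda>_. c)"
  by (simp add: set_integrable_def)

lemma nn_integral_norm_indicator_scaleR:
  fixes f :: "'a \<Rightarrow> real"
  shows "(\<integral>\<^sup>+ z. ennreal (norm (indicator E z *\<^sub>R f z)) \<partial>M)
    = (\<integral>\<^sup>+ z\<in>E. ennreal \<bar>f z\<bar> \<partial>M)"
  by (intro nn_integral_cong) (auto split: split_indicator)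

lemma dev_mono: "A \<subseteq> B \<Longrightarrow> dev M s A u c \<le> dev M s B u c"
  unfolding dev_def by (rule nn_set_integral_set_mono)

lemma dev_Un_le:
  assumes [measurable]: "A \<in> sets M" "B \<in> sets M" "u \<in> borel_measurable M"
  shows "dev M s (A \<union> B) u c \<le> dev M s A u c + dev M s B u c"
proof -
  have "dev M s (A \<union> B) u c \<le> (\<integral>\<^sup>+ z. ennreal (\<bar>u z - c\<bar> powr s) * indicator A z
      + ennreal (\<bar>u z - c\<bar> powr s) * indicator B z \<partial>M)"
    unfolding dev_def by (intro nn_integral_mono) (auto split: split_indicator)
  also have "\<dots> = dev M s A u c + dev M s B u c"
    unfolding dev_def by (subst nn_integral_add) auto
  finally show ?thesis .
qed

lemma dev_change_centre:
  assumes [measurable]: "E \<in> sets M" "u \<in> borel_measurable M" and "0 \<le> s"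
  shows "dev M s E u c
    \<le> ennreal (2 powr s) * (dev M s E u c' + emeasure M E * ennreal (\<bar>c' - c\<bar> powr s))"
proof -
  let ?d = "ennreal (\<bar>c' - c\<bar> powr s)"
  have "ennreal (\<bar>u z - c\<bar> powr s) \<le> ennreal (2 powr s) * (ennreal (\<bar>u z - c'\<bar> powr s) + ?d)" for z
    using abs_diff_powr_le[OF \<open>0 \<le> s\<close>, of "u z" c c']
    by (simp add: ennreal_mult[symmetric] ennreal_plus[symmetric] ennreal_leI del: ennreal_plus)
  then have "dev M s E u c
      \<le> (\<integral>\<^sup>+ z\<in>E. ennreal (2 powr s) * (ennreal (\<bar>u z - c'\<bar> powr s) + ?d) \<partial>M)"
    unfolding dev_def by (intro nn_integral_mono mult_right_mono) auto
  also have "\<dots> = ennreal (2 powr s) * (dev M s E u c' + emeasure M E * ?d)"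
    unfolding dev_def by (subst nn_set_integral_cmult_add) (auto simp: nn_set_integral_const)
  finally show ?thesis .
qed

lemma emeasure_mult_centre_dist_le:
  assumes [measurable]: "A \<in> sets M" "B \<in> sets M" "C \<in> sets M" "u \<in> borel_measurable M"
    and "C \<subseteq> A \<inter> B" "0 \<le> s"
  shows "emeasure M C * ennreal (\<bar>a - b\<bar> powr s)
    \<le> ennreal (2 powr s) * (dev M s A u a + dev M s B u b)"
proof -
  let ?k = "ennreal (2 powr s)"
  have "ennreal (\<bar>a - b\<bar> powr s) \<le> ?k * (ennreal (\<bar>u z - a\<bar> powr s) + ennreal (\<bar>u z - b\<bar> powr s))"
    for z
    using abs_diff_powr_le[OF \<open>0 \<le> s\<close>, of a b "u z"]
    by (simp add: abs_minus_commute ennreal_mult[symmetric] ennreal_plus[symmetric] ennreal_leI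
        del: ennreal_plus)
  then have "emeasure M C * ennreal (\<bar>a - b\<bar> powr s)
      \<le> (\<integral>\<^sup>+ z\<in>C. ?k * (ennreal (\<bar>u z - a\<bar> powr s) + ennreal (\<bar>u z - b\<bar> powr s)) \<partial>M)"
    unfolding nn_set_integral_const[OF assms(3), symmetric]
    by (intro nn_integral_mono mult_right_mono) auto
  also have "\<dots> = ?k * (dev M s C u a + dev M s C u b)"
    unfolding dev_def by (rule nn_set_integral_cmult_add) auto
  also have "\<dots> \<le> ?k * (dev M s A u a + dev M s B u b)"
    using \<open>C \<subseteq> A \<inter> B\<close> by (intro mult_left_mono add_mono dev_mono) auto
  finally show ?thesis .
qed

lemma dev_tangent_le:
  assumes [measurable]: "E \<in> sets M" "u \<in> borel_measurable M" and "0 < t" "1 \<le> s"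
  shows "ennreal (s * t powr (s - 1)) * (\<integral>\<^sup>+ z\<in>E. ennreal \<bar>u z - c\<bar> \<partial>M)
    \<le> dev M s E u c + emeasure M E * ennreal ((s - 1) * t powr s)"
proof -
  have "ennreal (s * t powr (s - 1)) * (\<integral>\<^sup>+ z\<in>E. ennreal \<bar>u z - c\<bar> \<partial>M)
      = (\<integral>\<^sup>+ z\<in>E. ennreal (s * t powr (s - 1) * \<bar>u z - c\<bar>) \<partial>M)"
    using assms by (subst nn_integral_cmult[symmetric]) (auto simp: ennreal_mult mult_ac)
  also have "\<dots> \<le> (\<integral>\<^sup>+ z\<in>E. ennreal (\<bar>u z - c\<bar> powr s) + ennreal ((s - 1) * t powr s) \<partial>M)"
    using powr_tangent_le[of "\<bar>u _ - c\<bar>" t s] assms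
    by (intro nn_integral_mono mult_right_mono)
      (auto simp: ennreal_plus[symmetric] ennreal_leI simp del: ennreal_plus)
  also have "\<dots> = dev M s E u c + emeasure M E * ennreal ((s - 1) * t powr s)"
    unfolding dev_def by (subst nn_set_integral_add) (auto simp: nn_set_integral_const)
  finally show ?thesis .
qed

lemma set_integrable_of_dev_finite:
  assumes [measurable]: "E \<in> sets M" "u \<in> borel_measurable M"
    and "dev M s E u c < \<infinity>" "emeasure M E < \<infinity>" "1 \<le> s"
  shows "set_integrable M E u"
proof -
  let ?F = "\<integral>\<^sup>+ z\<in>E. ennreal \<bar>u z - c\<bar> \<partial>M"
  have "?F \<le> ennreal s * ?F"
    using mult_right_mono[of 1 "ennreal s" ?F] \<open>1 \<le> s\<close> by simp
  also have "\<dots> \<le> dev M s E u c + emeasure M E * ennreal (s - 1)"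
    using dev_tangent_le[of E M u 1 s c] assms by simp
  also have "\<dots> < \<infinity>"
    using assms by (simp add: ennreal_mult_less_top)
  finally have "(\<integral>\<^sup>+ z. ennreal (norm (indicator E z *\<^sub>R (u z - c))) \<partial>M) < \<infinity>"
    by (simp only: nn_integral_norm_indicator_scaleR)
  then have "integrable M (\<lambda>z. indicator E z *\<^sub>R (u z - c))"
    by (intro integrableI_bounded) auto
  then have "set_integrable M E (\<lambda>z. (u z - c) + c)"
    unfolding set_integrable_def[symmetric] using assms
    by (intro set_integral_add set_integrable_const)
  then show ?thesis
    by simp
qed

lemma measure_mult_abs_avg_diff_le:
  assumes "set_integrable M E u" "E \<in> sets M" "emeasure M E < \<infinity>"
  shows "ennreal (measure M E * \<bar>avg M E u - c\<bar>)
    \<le> (\<integral>\<^sup>+ z\<in>E. ennreal \<bar>u z - c\<bar> \<partial>M)"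
proof (cases "measure M E = 0")
  case False
  have "measure M E * (avg M E u - c) = (LINT z:E|M. u z - c)"
    using False assms by (simp add: avg_def set_integral_const set_integrable_const field_simps)
  then have "measure M E * \<bar>avg M E u - c\<bar> = \<bar>LINT z:E|M. u z - c\<bar>"
    by (metis abs_mult abs_of_nonneg measure_nonneg)
  then have "ennreal (measure M E * \<bar>avg M E u - c\<bar>)
      = ennreal (norm (LINT z|M. indicator E z *\<^sub>R (u z - c)))"
    unfolding set_lebesgue_integral_def by simp
  also have "\<dots> \<le> (\<integral>\<^sup>+ z\<in>E. ennreal \<bar>u z - c\<bar> \<partial>M)"
    using integral_norm_bound_ennreal[of M "\<lambda>z. indicator E z *\<^sub>R (u z - c)",
        unfolded nn_integral_norm_indicator_scaleR]
      set_integral_diff(1)[OF assms(1) set_integrable_const[of E M c]] assms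
    by (simp add: set_integrable_def)
  finally show ?thesis .
qed simp

(* Jensen's inequality for x \<mapsto> |x - c|^s, by integrating the tangent bound at t = |u_E - c|. *)
lemma measure_mult_avg_powr_le_dev:
  assumes [measurable]: "E \<in> sets M" "u \<in> borel_measurable M"
    and "emeasure M E < \<infinity>" "1 \<le> s"
  shows "ennreal (measure M E * \<bar>avg M E u - c\<bar> powr s) \<le> dev M s E u c"
proof (cases "dev M s E u c < \<infinity> \<and> avg M E u \<noteq> c")
  case True
  define t where "t = \<bar>avg M E u - c\<bar>"
  define m where "m = measure M E"
  have "0 < t" "0 \<le> m" using True by (auto simp: t_def m_def)
  obtain J where J: "dev M s E u c = ennreal J" "0 \<le> J"
    using True by (cases "dev M s E u c" rule: ennreal_cases) auto
  have "ennreal (s * t powr s * m) = ennreal (s * t powr (s - 1)) * ennreal (m * t)"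
    using \<open>0 < t\<close> \<open>0 \<le> m\<close> \<open>1 \<le> s\<close>
    by (simp add: ennreal_mult[symmetric] powr_diff field_simps del: ennreal_mult)
  also have "\<dots> \<le> ennreal (s * t powr (s - 1)) * (\<integral>\<^sup>+ z\<in>E. ennreal \<bar>u z - c\<bar> \<partial>M)"
    using measure_mult_abs_avg_diff_le[of M E u c] set_integrable_of_dev_finite[of E M u s c]
      True assms
    by (intro mult_left_mono) (auto simp: t_def m_def)
  also have "\<dots> \<le> ennreal (J + (s - 1) * t powr s * m)"
    using dev_tangent_le[of E M u t s c] assms \<open>0 < t\<close> \<open>0 \<le> m\<close> J
    by (simp add: m_def emeasure_eq_ennreal_measure ennreal_mult[symmetric] ennreal_plus[symmetric]
        mult_ac del: ennreal_plus)
  finally have "s * t powr s * m \<le> J + (s - 1) * t powr s * m"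
    by (rule ennreal_le_iff[THEN iffD1, rotated]) (use J \<open>0 \<le> m\<close> \<open>1 \<le> s\<close> in simp)
  then show ?thesis
    using J by (simp add: t_def m_def algebra_simps)
qed (auto simp flip: less_top)

lemma dev_Un_le_pieces:
  assumes [measurable]: "E1 \<in> sets M" "E2 \<in> sets M" "B \<in> sets M" "u \<in> borel_measurable M"
    and "B \<subseteq> E1 \<inter> E2" "emeasure M (E1 \<union> E2) \<le> ennreal r * emeasure M B" "0 \<le> r" "0 \<le> s"
  shows "dev M s (E1 \<union> E2) u c1
    \<le> ennreal (2 powr s + 2 powr s * 2 powr s * r) * (dev M s E1 u c1 + dev M s E2 u c2)"
proof -
  define k where "k = ennreal (2 powr s)"
  define D where "D = dev M s E1 u c1 + dev M s E2 u c2"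
  let ?d = "ennreal (\<bar>c1 - c2\<bar> powr s)"
  have "1 \<le> k"
    unfolding k_def using \<open>0 \<le> s\<close> by (simp add: ge_one_powr_ge_zero)
  have "emeasure M E2 \<le> emeasure M (E1 \<union> E2)"
    by (intro emeasure_mono) auto
  also have "\<dots> \<le> ennreal r * emeasure M B"
    by fact
  finally have "emeasure M E2 * ?d \<le> ennreal r * emeasure M B * ?d"
    by (rule mult_right_mono) simp
  also have "\<dots> \<le> ennreal r * (k * D)"
    using emeasure_mult_centre_dist_le[of E1 M E2 B u s c1 c2] assms
    by (simp add: k_def D_def mult.assoc mult_left_mono)
  finally have "k * (dev M s E2 u c2 + emeasure M E2 * ?d)
      \<le> k * (dev M s E2 u c2 + ennreal r * (k * D))"
    by (intro mult_left_mono add_left_mono) auto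
  then have E2: "dev M s E2 u c1 \<le> k * (dev M s E2 u c2 + ennreal r * (k * D))"
    using dev_change_centre[of E2 M u s c1 c2] assms unfolding k_def
    by (simp add: abs_minus_commute)
  have "dev M s E1 u c1 \<le> k * dev M s E1 u c1"
    using \<open>1 \<le> k\<close> mult_right_mono[of 1 k "dev M s E1 u c1"] by simp
  then have E1: "dev M s E1 u c1 + k * dev M s E2 u c2 \<le> k * D"
    by (simp add: D_def distrib_left)
  have "dev M s (E1 \<union> E2) u c1 \<le> dev M s E1 u c1 + dev M s E2 u c1"
    by (rule dev_Un_le) auto
  also have "\<dots> \<le> dev M s E1 u c1 + k * (dev M s E2 u c2 + ennreal r * (k * D))"
    using E2 by (rule add_left_mono)
  also have "\<dots> = (dev M s E1 u c1 + k * dev M s E2 u c2) + k * k * ennreal r * D"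
    by (simp add: distrib_left mult_ac)
  also have "\<dots> \<le> (k + k * k * ennreal r) * D"
    using E1 by (simp add: distrib_right)
  also have "\<dots> = ennreal (2 powr s + 2 powr s * 2 powr s * r) * D"
    using \<open>0 \<le> r\<close> by (simp add: k_def ennreal_mult ennreal_plus)
  finally show ?thesis
    unfolding D_def .
qed

(* One factor 2^s for each use of the quasi-triangle inequality; r = \<mu>(E1 \<union> E2) / \<mu>(B) comes
   from comparing the means over E1 and E2 on the common set B. *)
definition union_const :: "real \<Rightarrow> real \<Rightarrow> real" where
  "union_const s r = 2 * 2 powr s * (2 powr s + 2 powr s * 2 powr s * r)"

lemma union_const_nonneg: "0 \<le> r \<Longrightarrow> 0 \<le> union_const s r"
  by (simp add: union_const_def)

lemma dev_Un_avg_le: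
  assumes [measurable]: "E1 \<in> sets M" "E2 \<in> sets M" "B \<in> sets M" "u \<in> borel_measurable M"
    and "B \<subseteq> E1 \<inter> E2" "0 < measure M B" "emeasure M (E1 \<union> E2) < \<infinity>" "1 \<le> s"
  shows "dev M s (E1 \<union> E2) u (avg M (E1 \<union> E2) u)
    \<le> ennreal (union_const s (measure M (E1 \<union> E2) / measure M B))
      * (dev M s E1 u c1 + dev M s E2 u c2)"
proof -
  let ?G = "E1 \<union> E2"
  define r where "r = measure M ?G / measure M B"
  define D where "D = dev M s E1 u c1 + dev M s E2 u c2"
  have "0 \<le> r"
    by (simp add: r_def)
  have "emeasure M B \<le> emeasure M ?G"
    using \<open>B \<subseteq> E1 \<inter> E2\<close> by (intro emeasure_mono) auto
  then have "emeasure M B = ennreal (measure M B)" "emeasure M ?G = ennreal (measure M ?G)"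
    using assms(7) by (auto intro!: emeasure_eq_ennreal_measure simp: top_unique)
  then have "emeasure M ?G = ennreal r * emeasure M B"
    using assms(6) by (simp add: r_def ennreal_mult[symmetric] del: ennreal_mult)
  then have c1: "dev M s ?G u c1 \<le> ennreal (2 powr s + 2 powr s * 2 powr s * r) * D"
    unfolding D_def using assms \<open>0 \<le> r\<close> by (intro dev_Un_le_pieces) auto
  let ?a = "avg M ?G u"
  have "emeasure M ?G * ennreal (\<bar>c1 - ?a\<bar> powr s) \<le> dev M s ?G u c1"
    using measure_mult_avg_powr_le_dev[of ?G M u s c1] assms
    by (simp add: emeasure_eq_ennreal_measure ennreal_mult abs_minus_commute)
  then have "ennreal (2 powr s) * (dev M s ?G u c1 + emeasure M ?G * ennreal (\<bar>c1 - ?a\<bar> powr s))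
      \<le> ennreal (2 powr s) * (2 * dev M s ?G u c1)"
    by (intro mult_left_mono) (auto simp: mult_2)
  then have "dev M s ?G u ?a \<le> ennreal (2 powr s) * (2 * dev M s ?G u c1)"
    using dev_change_centre[of ?G M u s ?a c1] assms by simp
  also have "\<dots> \<le> ennreal (2 powr s) * (2 * (ennreal (2 powr s + 2 powr s * 2 powr s * r) * D))"
    using c1 by (intro mult_left_mono) auto
  also have "\<dots> = ennreal (union_const s r) * D"
    using \<open>0 \<le> r\<close> by (simp add: union_const_def ennreal_mult distrib_left distrib_right mult_ac)
  finally show ?thesis
    unfolding D_def r_def .
qed

lemma dev_avg_eq_osc_mult:
  "emeasure M E \<noteq> 0 \<Longrightarrow> emeasure M E < \<infinity>
    \<Longrightarrow> dev M s E u (avg M E u) = osc M s E u * emeasure M E"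
  by (simp add: osc_eq_dev ennreal_divide_times)

lemma osc_Un_le:
  assumes [measurable]: "E1 \<in> sets M" "E2 \<in> sets M" "B \<in> sets M" "u \<in> borel_measurable M"
    and "B \<subseteq> E1 \<inter> E2" "0 < measure M B" "emeasure M (E1 \<union> E2) < \<infinity>" "1 \<le> s"
    and "osc M s E1 u \<le> ennreal C1 * S" "osc M s E2 u \<le> ennreal C2 * S" "0 \<le> C1" "0 \<le> C2"
  shows "osc M s (E1 \<union> E2) u
    \<le> ennreal (union_const s (measure M (E1 \<union> E2) / measure M B) * (C1 + C2)) * S"
proof -
  let ?G = "E1 \<union> E2"
  define K where "K = union_const s (measure M ?G / measure M B)"
  have "0 < emeasure M B"
    using \<open>0 < measure M B\<close> by (simp add: measure_def enn2real_positive_iff)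
  have piece: "dev M s E u (avg M E u) \<le> ennreal C * S * emeasure M ?G"
    if "osc M s E u \<le> ennreal C * S" "B \<subseteq> E" "E \<subseteq> ?G" "E \<in> sets M" for E C
  proof -
    have "emeasure M B \<le> emeasure M E" "emeasure M E \<le> emeasure M ?G"
      using that by (auto intro!: emeasure_mono)
    then have "dev M s E u (avg M E u) = osc M s E u * emeasure M E"
      using \<open>0 < emeasure M B\<close> assms(7) by (intro dev_avg_eq_osc_mult) auto
    also have "\<dots> \<le> ennreal C * S * emeasure M ?G"
      using that(1) \<open>emeasure M E \<le> emeasure M ?G\<close> by (intro mult_mono) auto
    finally show ?thesis .
  qed
  have "emeasure M B \<le> emeasure M ?G"
    using assms(5) by (auto intro!: emeasure_mono)
  have "dev M s ?G u (avg M ?G u)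
      \<le> ennreal K * (dev M s E1 u (avg M E1 u) + dev M s E2 u (avg M E2 u))"
    unfolding K_def using assms by (intro dev_Un_avg_le) auto
  also have "\<dots> \<le> ennreal K * (ennreal C1 * S * emeasure M ?G + ennreal C2 * S * emeasure M ?G)"
    using assms piece by (intro mult_left_mono add_mono) auto
  also have "\<dots> = ennreal (K * (C1 + C2)) * S * emeasure M ?G"
    using assms
    by (simp add: K_def ennreal_mult ennreal_plus union_const_nonneg distrib_left distrib_right
        mult_ac)
  finally have "osc M s ?G u \<le> ennreal (K * (C1 + C2)) * S * emeasure M ?G / emeasure M ?G"
    unfolding osc_eq_dev by (rule divide_right_mono_ennreal)
  then show ?thesis
    using \<open>0 < emeasure M B\<close> \<open>emeasure M B \<le> emeasure M ?G\<close> assms(7)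
    by (simp add: K_def mult_divide_eq_ennreal)
qed

lemma sets_wmeasure [simp]: "sets (wmeasure w) = sets borel"
  by (simp add: wmeasure_def)

lemma measure_wmeasure_ball_pos:
  assumes "A_weight r \<Omega> w" "B \<in> balls_in \<Omega>"
  shows "0 < measure (wmeasure w) B"
proof -
  have [measurable]: "w \<in> borel_measurable borel" and "\<And>z. 0 \<le> w z"
    using assms(1) by (auto simp: A_weight_def)
  let ?v = "\<lambda>z. if 0 < w z then ennreal (w z powr (1 / (1 - r))) else \<infinity>"
  have fin: "(\<integral>\<^sup>+ z\<in>B. ennreal (w z) \<partial>lborel) < \<infinity>"
    "(\<integral>\<^sup>+ z\<in>B. ?v z \<partial>lborel) < \<infinity>"
    using assms unfolding A_weight_def by blast+
  obtain x \<rho> where B: "B = ball x \<rho>" "0 < \<rho>"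
    using assms(2) by (auto simp: balls_in_def)
  then have [measurable]: "B \<in> sets borel"
    by simp
  have eq: "emeasure (wmeasure w) B = (\<integral>\<^sup>+ z\<in>B. ennreal (w z) \<partial>lborel)"
    unfolding wmeasure_def by (subst emeasure_density) auto
  have "emeasure (wmeasure w) B \<noteq> 0"
  proof
    assume "emeasure (wmeasure w) B = 0"
    then have "AE z in lborel. z \<in> B \<longrightarrow> w z = 0"
      using \<open>\<And>z. 0 \<le> w z\<close>
      by (subst (asm) eq, subst (asm) nn_integral_0_iff_AE) (auto split: split_indicator)
    then have "(\<integral>\<^sup>+ z\<in>B. ?v z \<partial>lborel) = (\<integral>\<^sup>+ z. \<infinity> * indicator B z \<partial>lborel)"
      by (intro nn_integral_cong_AE) (auto split: split_indicator)
    also have "\<dots> = \<infinity>"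
      using B by (simp add: nn_integral_cmult_indicator emeasure_ball ennreal_mult_eq_top_iff
          dual_order.strict_implies_not_eq[OF unit_ball_vol_pos])
    finally show False
      using fin(2) by simp
  qed
  then show ?thesis
    using fin(1) by (simp add: eq measure_def enn2real_positive_iff zero_less_iff_neq_zero)
qed

lemma balls_in_mono: "A \<subseteq> B \<Longrightarrow> balls_in A \<subseteq> balls_in B"
  unfolding balls_in_def by auto

lemma L1_loc_mono: "L1_loc M F u \<Longrightarrow> E \<subseteq> F \<Longrightarrow> L1_loc M E u"
  unfolding L1_loc_def by blast

lemma domain_Un: "domain A \<Longrightarrow> domain B \<Longrightarrow> A \<inter> B \<noteq> {} \<Longrightarrow> domain (A \<union> B)"
  unfolding domain_def by (auto intro: connected_Un)

lemma balls_in_nonempty: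
  assumes "open \<Omega>" "\<Omega> \<noteq> {}"
  shows "balls_in \<Omega> \<noteq> {}"
proof -
  obtain x where "x \<in> \<Omega>"
    using assms(2) by blast
  then obtain e where "0 < e" "ball x e \<subseteq> \<Omega>"
    using assms(1) open_contains_ball by blast
  then show ?thesis
    unfolding balls_in_def by blast
qed

lemma A_weight_common_ball:
  assumes "A_weight r (G1 \<union> G2) w" "open G1" "open G2" "G1 \<inter> G2 \<noteq> {}"
  obtains B where "B \<subseteq> G1 \<inter> G2" "B \<in> sets borel" "0 < measure (wmeasure w) B"
proof -
  obtain B where B: "B \<in> balls_in (G1 \<inter> G2)"
    using balls_in_nonempty[of "G1 \<inter> G2"] assms(2-4) by auto
  then have "0 < measure (wmeasure w) B"
    using measure_wmeasure_ball_pos[OF assms(1)] balls_in_mono[of "G1 \<inter> G2" "G1 \<union> G2"] by blast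
  moreover have "B \<subseteq> G1 \<inter> G2" "B \<in> sets borel"
    using B by (auto simp: balls_in_def)
  ultimately show ?thesis
    using that by blast
qed

lemma averaging_domain_osc_le_SUP:
  assumes "averaging_domain s w E" "E \<subseteq> F"
  obtains C where "0 \<le> C"
    "\<And>u. L1_loc (wmeasure w) F u \<Longrightarrow>
      osc (wmeasure w) s E u \<le> ennreal C * (SUP B\<in>balls_in F. osc (wmeasure w) s B u)"
proof -
  obtain C where C: "\<forall>u. L1_loc (wmeasure w) E u \<longrightarrow>
      osc (wmeasure w) s E u \<le> ennreal (C powr s) * (SUP B\<in>balls_in E. osc (wmeasure w) s B u)"
    using assms(1) unfolding averaging_domain_def by blast
  have "osc (wmeasure w) s E u \<le> ennreal (C powr s) * (SUP B\<in>balls_in F. osc (wmeasure w) s B u)"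
    if "L1_loc (wmeasure w) F u" for u
  proof -
    have "(SUP B\<in>balls_in E. osc (wmeasure w) s B u) \<le> (SUP B\<in>balls_in F. osc (wmeasure w) s B u)"
      by (rule SUP_subset_mono[OF balls_in_mono[OF assms(2)]]) simp
    have "osc (wmeasure w) s E u \<le> ennreal (C powr s) * (SUP B\<in>balls_in E. osc (wmeasure w) s B u)"
      using C L1_loc_mono[OF that assms(2)] by blast
    also have "\<dots> \<le> ennreal (C powr s) * (SUP B\<in>balls_in F. osc (wmeasure w) s B u)"
      by (rule mult_left_mono) (fact, simp)
    finally show ?thesis .
  qed
  then show ?thesis
    by (rule that[rotated]) simp_all
qed

theorem mainTheorem11:
  fixes w :: "'a::euclidean_space \<Rightarrow> real" and G1 G2 :: "'a set" and s r :: real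
  assumes "1 \<le> s" and "1 < r"
    and "averaging_domain s w G1" and "averaging_domain s w G2"
    and "G1 \<inter> G2 \<noteq> {}"
    and "A_weight r (G1 \<union> G2) w"
  shows "averaging_domain s w (G1 \<union> G2)"
proof -
  let ?\<mu> = "wmeasure w" and ?G = "G1 \<union> G2"
  obtain C1 where "0 \<le> C1" and C1: "\<And>u. L1_loc ?\<mu> ?G u \<Longrightarrow>
      osc ?\<mu> s G1 u \<le> ennreal C1 * (SUP B\<in>balls_in ?G. osc ?\<mu> s B u)"
    using averaging_domain_osc_le_SUP[OF assms(3), of ?G] by auto
  obtain C2 where "0 \<le> C2" and C2: "\<And>u. L1_loc ?\<mu> ?G u \<Longrightarrow>
      osc ?\<mu> s G2 u \<le> ennreal C2 * (SUP B\<in>balls_in ?G. osc ?\<mu> s B u)"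
    using averaging_domain_osc_le_SUP[OF assms(4), of ?G] by auto
  have G: "domain G1" "domain G2" "bounded G1" "bounded G2"
    "emeasure ?\<mu> G1 < \<infinity>" "emeasure ?\<mu> G2 < \<infinity>"
    using assms(3,4) by (simp_all add: averaging_domain_def)
  then have sets: "G1 \<in> sets ?\<mu>" "G2 \<in> sets ?\<mu>"
    by (simp_all add: domain_def)
  have fin: "emeasure ?\<mu> ?G < \<infinity>"
    using emeasure_subadditive[OF sets] G(5,6) by (simp add: order.strict_trans1)
  obtain B where B: "B \<subseteq> G1 \<inter> G2" "B \<in> sets ?\<mu>" "0 < measure ?\<mu> B"
    using A_weight_common_ball[OF assms(6) _ _ assms(5)] G(1,2) by (auto simp: domain_def)
  define K where "K = union_const s (measure ?\<mu> ?G / measure ?\<mu> B) * (C1 + C2)"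
  have "osc ?\<mu> s ?G u \<le> ennreal ((K powr (1 / s)) powr s) * (SUP B\<in>balls_in ?G. osc ?\<mu> s B u)"
    if "L1_loc ?\<mu> ?G u" for u
    using osc_Un_le[OF sets B(2) _ B(1,3) fin assms(1) C1[OF that] C2[OF that] \<open>0 \<le> C1\<close> \<open>0 \<le> C2\<close>]
      that assms(1) \<open>0 \<le> C1\<close> \<open>0 \<le> C2\<close>
    by (simp add: K_def powr_powr L1_loc_def union_const_nonneg)
  then show ?thesis
    using domain_Un[OF G(1,2) assms(5)] G(3,4) fin
    unfolding averaging_domain_def by (intro conjI exI[of _ "K powr (1 / s)"]) auto
qed

end
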